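(* Let $\epsilon_1,\epsilon_2,\epsilon_3,\epsilon_4\in\{\pm1\}$, let $\Lambda(x)$ and ${}^v\Lambda(x,y^4)$ be smooth functions of $x=(x^1,x^2)$, resp. $(x,y^4)$, and let $\widetilde\Lambda_0\neq0$ be a constant. Let $\tilde\Phi(x,y^4)>0$ be smooth with $\partial_4\tilde\Phi\neq0$, and let $\Xi(x,y^4)$ satisfy $\partial_4\Xi={}^v\Lambda\,\partial_4(\tilde\Phi^2)$ with $\Xi\neq0$ and $\partial_4\Xi\neq0$ everywhere. Let $\psi(x)$ be any solution of $\epsilon_1\partial^2_{11}\psi+\epsilon_2\partial^2_{22}\psi=2\Lambda(x)$, and let ${}_1n_k(x)$, ${}_2\tilde n_k(x)$ ($k=1,2$) be arbitrary smooth functions. Define $$h_3=\frac{\tilde\Phi^2}{4\widetilde\Lambda_0},\quad h_4=\frac{(\partial_4\tilde\Phi)^2}{\Xi},\quad n_k={}_1n_k+{}_2\tilde n_k\int\frac{(\partial_4\tilde\Phi)^2}{\tilde\Phi^3\,\Xi}\,dy^4,\quad w_i=\frac{\partial_i\Xi}{\partial_4\Xi}.$$ Then $(\psi,h_3,h_4,n_k,w_i)$ solves the system $$\epsilon_1\partial^2_{11}\psi+\epsilon_2\partial^2_{22}\psi=2\Lambda,\quad (\partial_4\phi)(\partial_4h_3)=2h_3h_4\,{}^v\Lambda,\quad \partial^2_{44}n_i+\gamma\,\partial_4n_i=0,\quad \beta w_i-\alpha_i=0,$$ where $\phi=\ln|\partial_4h_3/\sqrt{|h_3h_4|}|$, $\gamma=\partial_4\ln(|h_3|^{3/2}/|h_4|)$,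 $\alpha_i=(\partial_i\phi)(\partial_4h_3)/(2h_3)$, $\beta=(\partial_4\phi)(\partial_4h_3)/(2h_3)$. Consequently the metric $$ds^2=\epsilon_ie^{\psi}(dx^i)^2+\frac{\tilde\Phi^2}{4\widetilde\Lambda_0}\Big[dy^3+n_k dx^k\Big]^2+\frac{(\partial_4\tilde\Phi)^2}{\Xi}\Big[dy^4+\frac{\partial_i\Xi}{\partial_4\Xi}dx^i\Big]^2$$ is a generic off-diagonal solution, with Killing symmetry $\partial/\partial y^3$, of the decoupled 4-d nonholonomic Einstein equations for the canonical d-connection with sources $\Lambda$, ${}^v\Lambda$.
   Context: Coordinates $(x^1,x^2,y^3,y^4)$, $\partial_i=\partial/\partial x^i$, $\partial_4=\partial/\partial y^4$; summation over $i,k=1,2$. $\int\cdot\,dy^4$ denotes any antiderivative with respect to $y^4$ (with $x$ fixed). The "decoupled 4-d nonholonomic Einstein equations" are exactly the displayed system of four equations for the metric $ds^2=\epsilon_ie^\psi(dx^i)^2+h_3(dy^3+n_kdx^k)^2+h_4(dy^4+w_idx^i)^2$ with $h_a,n_k,w_i$ functions of $(x,y^4)$. *)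

theory Defs
  imports "HOL-Analysis.Analysis"
begin

text \<open>Functions on coordinates (x1, x2, y4) are curried: f x1 x2 y4.
  The coordinate y3 does not appear (Killing symmetry along y3).\<close>

definition pd1 :: "(real \<Rightarrow> real \<Rightarrow> real \<Rightarrow> real) \<Rightarrow> real \<Rightarrow> real \<Rightarrow> real \<Rightarrow> real" where
  "pd1 f = (\<lambda>a b c. deriv (\<lambda>t. f t b c) a)"

definition pd2 :: "(real \<Rightarrow> real \<Rightarrow> real \<Rightarrow> real) \<Rightarrow> real \<Rightarrow> real \<Rightarrow> real \<Rightarrow> real" where
  "pd2 f = (\<lambda>a b c. deriv (\<lambda>t. f a t c) b)"

definition pd4 :: "(real \<Rightarrow> real \<Rightarrow> real \<Rightarrow> real) \<Rightarrow> real \<Rightarrow> real \<Rightarrow> real \<Rightarrow> real" where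
  "pd4 f = (\<lambda>a b c. deriv (\<lambda>t. f a b t) c)"

definition pdx :: "nat \<Rightarrow> (real \<Rightarrow> real \<Rightarrow> real \<Rightarrow> real) \<Rightarrow> real \<Rightarrow> real \<Rightarrow> real \<Rightarrow> real" where
  "pdx i f = (if i = 1 then pd1 f else pd2 f)"

text \<open>Smoothness (C-infinity) on R^3: continuous, all first partials exist everywhere,
  and the partials are again smooth.\<close>
coinductive smooth3 :: "(real \<Rightarrow> real \<Rightarrow> real \<Rightarrow> real) \<Rightarrow> bool" where
  "\<lbrakk> continuous_on UNIV (\<lambda>p. f (fst p) (fst (snd p)) (snd (snd p)));
     \<forall>a b c. (\<lambda>t. f t b c) differentiable (at a);
     \<forall>a b c. (\<lambda>t. f a t c) differentiable (at b);
     \<forall>a b c. (\<lambda>t. f a b t) differentiable (at c);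
     smooth3 (pd1 f); smooth3 (pd2 f); smooth3 (pd4 f) \<rbrakk> \<Longrightarrow> smooth3 f"

definition nh_phi where
  "nh_phi h3 h4 = (\<lambda>a b c. ln \<bar>pd4 h3 a b c / sqrt \<bar>h3 a b c * h4 a b c\<bar>\<bar>)"

definition nh_gamma where
  "nh_gamma h3 h4 = pd4 (\<lambda>a b c. ln (\<bar>h3 a b c\<bar> powr (3/2) / \<bar>h4 a b c\<bar>))"

definition nh_alpha where
  "nh_alpha h3 h4 i = (\<lambda>a b c. pdx i (nh_phi h3 h4) a b c * pd4 h3 a b c / (2 * h3 a b c))"

definition nh_beta where
  "nh_beta h3 h4 = (\<lambda>a b c. pd4 (nh_phi h3 h4) a b c * pd4 h3 a b c / (2 * h3 a b c))"

definition decoupled_system ::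
  "real \<Rightarrow> real \<Rightarrow> (real \<Rightarrow> real \<Rightarrow> real) \<Rightarrow> (real \<Rightarrow> real \<Rightarrow> real \<Rightarrow> real)
   \<Rightarrow> (real \<Rightarrow> real \<Rightarrow> real)
   \<Rightarrow> (real \<Rightarrow> real \<Rightarrow> real \<Rightarrow> real) \<Rightarrow> (real \<Rightarrow> real \<Rightarrow> real \<Rightarrow> real)
   \<Rightarrow> (nat \<Rightarrow> real \<Rightarrow> real \<Rightarrow> real \<Rightarrow> real) \<Rightarrow> (nat \<Rightarrow> real \<Rightarrow> real \<Rightarrow> real \<Rightarrow> real) \<Rightarrow> bool" where
  "decoupled_system eps1 eps2 Lam vLam psi h3 h4 n w \<longleftrightarrow>
     (\<forall>a b. eps1 * deriv (\<lambda>t. deriv (\<lambda>s. psi s b) t) a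
            + eps2 * deriv (\<lambda>t. deriv (\<lambda>s. psi a s) t) b = 2 * Lam a b)
   \<and> (\<forall>a b c. pd4 (nh_phi h3 h4) a b c * pd4 h3 a b c = 2 * h3 a b c * h4 a b c * vLam a b c)
   \<and> (\<forall>i\<in>{1,2}. \<forall>a b c. pd4 (pd4 (n i)) a b c + nh_gamma h3 h4 a b c * pd4 (n i) a b c = 0)
   \<and> (\<forall>i\<in>{1,2}. \<forall>a b c. nh_beta h3 h4 a b c * w i a b c - nh_alpha h3 h4 i a b c = 0)"

end

theory Submission
  imports Defs
begin

text \<open>With \<open>h\<^sub>3 = \<Phi>\<^sup>2/(4\<Lambda>\<^sub>0)\<close> and \<open>h\<^sub>4 = (\<partial>\<^sub>4\<Phi>)\<^sup>2/\<Xi>\<close> the quotient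
  \<open>\<partial>\<^sub>4h\<^sub>3/\<surd>|h\<^sub>3h\<^sub>4|\<close> equals \<open>\<surd>|\<Xi>/\<Lambda>\<^sub>0|\<close>, so \<open>\<phi> = (ln|\<Xi>| - ln|\<Lambda>\<^sub>0|)/2\<close>. Then
  \<open>\<partial>\<phi> = \<partial>\<Xi>/(2\<Xi>)\<close> in every direction, which gives the \<open>w\<close>-equation at once and, together
  with \<open>\<partial>\<^sub>4\<Xi> = \<^sup>v\<Lambda> \<partial>\<^sub>4(\<Phi>\<^sup>2)\<close>, the \<open>h\<close>-equation. Moreover \<open>|h\<^sub>4|/|h\<^sub>3|\<^sup>3\<^sup>/\<^sup>2\<close> is a constant
  multiple of \<open>|Q|\<close>, where \<open>Q = (\<partial>\<^sub>4\<Phi>)\<^sup>2/(\<Phi>\<^sup>3\<Xi>)\<close> is the integrand of \<open>n\<^sub>k\<close>, so \<open>\<gamma> = -\<partial>\<^sub>4Q/Q\<close>; since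
  \<open>\<partial>\<^sub>4n\<^sub>k\<close> is a multiple of \<open>Q\<close>, this is exactly \<open>\<partial>\<^sub>4\<^sub>4n\<^sub>k + \<gamma> \<partial>\<^sub>4n\<^sub>k = 0\<close>.\<close>

lemma DERIV_ln_nonzero:
  fixes x :: real
  assumes "x \<noteq> 0"
  shows "DERIV ln x :> 1 / x"
proof (cases "x > 0")
  case True
  then show ?thesis by (rule DERIV_ln_divide)
next
  case False
  with assms have "DERIV (\<lambda>t. ln (- t)) x :> 1 / (- x) * (- 1)"
    by (intro DERIV_chain2[OF DERIV_ln_divide] derivative_eq_intros) auto
  then show ?thesis by (simp add: ln_minus)
qed

lemma DERIV_ln_nonzero_comp [derivative_intros]:
  fixes g :: "real \<Rightarrow> real"
  assumes "(g has_real_derivative g') (at x)" "g x \<noteq> 0"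
  shows "((\<lambda>t. ln (g t)) has_real_derivative g' / g x) (at x)"
  using DERIV_chain2[OF DERIV_ln_nonzero[OF assms(2)] assms(1)] by simp

text \<open>The real logarithm is totalised by \<open>ln x = ln |x|\<close>, so the absolute values in
  \<open>\<phi>\<close> and \<open>\<gamma>\<close> can be dropped and \<open>ln\<close> of a nonzero function differentiated directly.\<close>

lemma ln_abs [simp]: "ln \<bar>x\<bar> = ln (x::real)"
  by (cases "x \<ge> 0") (simp_all add: ln_minus)

lemma pd1_eqI: "((\<lambda>t. f t b c) has_real_derivative D) (at a) \<Longrightarrow> pd1 f a b c = D"
  by (simp add: pd1_def DERIV_imp_deriv)

lemma pd2_eqI: "((\<lambda>t. f a t c) has_real_derivative D) (at b) \<Longrightarrow> pd2 f a b c = D"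
  by (simp add: pd2_def DERIV_imp_deriv)

lemma pd4_eqI: "((\<lambda>t. f a b t) has_real_derivative D) (at c) \<Longrightarrow> pd4 f a b c = D"
  by (simp add: pd4_def DERIV_imp_deriv)

lemma smooth3_has_pd1: "smooth3 f \<Longrightarrow> ((\<lambda>t. f t b c) has_real_derivative pd1 f a b c) (at a)"
  by (erule smooth3.cases) (simp add: pd1_def DERIV_deriv_iff_real_differentiable)

lemma smooth3_has_pd2: "smooth3 f \<Longrightarrow> ((\<lambda>t. f a t c) has_real_derivative pd2 f a b c) (at b)"
  by (erule smooth3.cases) (simp add: pd2_def DERIV_deriv_iff_real_differentiable)

lemma smooth3_has_pd4: "smooth3 f \<Longrightarrow> ((\<lambda>t. f a b t) has_real_derivative pd4 f a b c) (at c)"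
  by (erule smooth3.cases) (simp add: pd4_def DERIV_deriv_iff_real_differentiable)

lemma smooth3_pd4: "smooth3 f \<Longrightarrow> smooth3 (pd4 f)"
  by (erule smooth3.cases) simp

locale canonical_ansatz =
  fixes Lam0 :: real and Phi Xi :: "real \<Rightarrow> real \<Rightarrow> real \<Rightarrow> real"
  assumes Lam0_nz: "Lam0 \<noteq> 0"
    and smooth_Phi: "smooth3 Phi"
    and Phi_nz: "Phi a b c \<noteq> 0"
    and pd4_Phi_nz: "pd4 Phi a b c \<noteq> 0"
    and smooth_Xi: "smooth3 Xi"
    and Xi_nz: "Xi a b c \<noteq> 0"
begin

definition h3 :: "real \<Rightarrow> real \<Rightarrow> real \<Rightarrow> real" where
  "h3 = (\<lambda>a b c. (Phi a b c)\<^sup>2 / (4 * Lam0))"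

definition h4 :: "real \<Rightarrow> real \<Rightarrow> real \<Rightarrow> real" where
  "h4 = (\<lambda>a b c. (pd4 Phi a b c)\<^sup>2 / Xi a b c)"

definition n_integrand :: "real \<Rightarrow> real \<Rightarrow> real \<Rightarrow> real" where
  "n_integrand = (\<lambda>a b c. (pd4 Phi a b c)\<^sup>2 / ((Phi a b c) ^ 3 * Xi a b c))"

lemma pd4_h3: "pd4 h3 a b c = Phi a b c * pd4 Phi a b c / (2 * Lam0)"
  unfolding h3_def using Lam0_nz smooth3_has_pd4[OF smooth_Phi]
  by (intro pd4_eqI derivative_eq_intros) auto

lemma nh_phi_eq: "nh_phi h3 h4 = (\<lambda>a b c. (ln (Xi a b c) - ln Lam0) / 2)"
proof (intro ext)
  fix a b c
  have sqrt_eq: "\<bar>pd4 h3 a b c / sqrt \<bar>h3 a b c * h4 a b c\<bar>\<bar> = sqrt (\<bar>Xi a b c\<bar> / \<bar>Lam0\<bar>)"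
    using Lam0_nz Xi_nz[of a b c] Phi_nz[of a b c] pd4_Phi_nz[of a b c]
    unfolding pd4_h3 unfolding h3_def h4_def
    by (simp add: abs_mult real_sqrt_divide real_sqrt_mult power2_eq_square field_simps)
  have "nh_phi h3 h4 a b c = ln (sqrt (\<bar>Xi a b c\<bar> / \<bar>Lam0\<bar>))"
    unfolding nh_phi_def sqrt_eq ..
  also have "\<dots> = (ln (Xi a b c) - ln Lam0) / 2"
    using Lam0_nz Xi_nz[of a b c] by (simp add: ln_sqrt ln_div)
  finally show "nh_phi h3 h4 a b c = (ln (Xi a b c) - ln Lam0) / 2" .
qed

lemma pd4_nh_phi: "pd4 (nh_phi h3 h4) a b c = pd4 Xi a b c / (2 * Xi a b c)"
  unfolding nh_phi_eq using Xi_nz smooth3_has_pd4[OF smooth_Xi]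
  by (intro pd4_eqI derivative_eq_intros) auto

lemma pdx_nh_phi: "pdx i (nh_phi h3 h4) a b c = pdx i Xi a b c / (2 * Xi a b c)"
  unfolding nh_phi_eq pdx_def
  using Xi_nz smooth3_has_pd1[OF smooth_Xi] smooth3_has_pd2[OF smooth_Xi]
  by (auto intro!: pd1_eqI pd2_eqI derivative_eq_intros)

lemma n_integrand_nz: "n_integrand a b c \<noteq> 0"
  using Phi_nz pd4_Phi_nz Xi_nz by (simp add: n_integrand_def)

lemma has_pd4_n_integrand:
  "((\<lambda>t. n_integrand a b t) has_real_derivative pd4 n_integrand a b c) (at c)"
proof -
  have "(\<lambda>t. n_integrand a b t) differentiable (at c)"
    unfolding n_integrand_def real_differentiable_def
    using DERIV_divide[OF DERIV_power[OF smooth3_has_pd4[OF smooth3_pd4[OF smooth_Phi]]]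
        DERIV_mult[OF DERIV_power[OF smooth3_has_pd4[OF smooth_Phi]] smooth3_has_pd4[OF smooth_Xi]]]
      Phi_nz Xi_nz
    by (meson mult_eq_0_iff power_eq_0_iff)
  then show ?thesis
    by (simp add: DERIV_deriv_iff_real_differentiable pd4_def)
qed

lemma ln_h3_powr_div_h4:
  "ln (\<bar>h3 a b c\<bar> powr (3/2) / \<bar>h4 a b c\<bar>) = - ln (n_integrand a b c) - 3/2 * ln (4 * Lam0)"
  using Lam0_nz Phi_nz[of a b c] pd4_Phi_nz[of a b c] Xi_nz[of a b c]
  by (simp add: h3_def h4_def n_integrand_def ln_div ln_mult ln_realpow algebra_simps)

lemma nh_gamma_eq: "nh_gamma h3 h4 a b c = - pd4 n_integrand a b c / n_integrand a b c"
  unfolding nh_gamma_def ln_h3_powr_div_h4 using n_integrand_nz has_pd4_n_integrand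
  by (intro pd4_eqI derivative_eq_intros) auto

lemma decoupled_h_equation:
  assumes "pd4 Xi a b c = vLam a b c * pd4 (\<lambda>a b c. (Phi a b c)\<^sup>2) a b c"
  shows "pd4 (nh_phi h3 h4) a b c * pd4 h3 a b c = 2 * h3 a b c * h4 a b c * vLam a b c"
proof -
  have "pd4 (\<lambda>a b c. (Phi a b c)\<^sup>2) a b c = 2 * Phi a b c * pd4 Phi a b c"
    using smooth3_has_pd4[OF smooth_Phi] by (auto intro!: pd4_eqI derivative_eq_intros)
  then show ?thesis
    using assms Lam0_nz Xi_nz[of a b c] unfolding pd4_nh_phi pd4_h3
    by (simp add: h3_def h4_def field_simps power2_eq_square)
qed

lemma decoupled_n_equation:
  fixes m m' :: "real \<Rightarrow> real \<Rightarrow> real" and A :: "real \<Rightarrow> real \<Rightarrow> real \<Rightarrow> real"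
  assumes "\<forall>a b c. ((\<lambda>t. A a b t) has_real_derivative n_integrand a b c) (at c)"
  defines "n \<equiv> \<lambda>a b c. m a b + m' a b * A a b c"
  shows "pd4 (pd4 n) a b c + nh_gamma h3 h4 a b c * pd4 n a b c = 0"
proof -
  have "pd4 n = (\<lambda>a b c. m' a b * n_integrand a b c)"
    unfolding n_def using assms(1) by (intro ext pd4_eqI) (auto intro!: derivative_eq_intros)
  moreover have "pd4 (\<lambda>a b c. m' a b * n_integrand a b c) a b c = m' a b * pd4 n_integrand a b c"
    using has_pd4_n_integrand by (auto intro!: pd4_eqI derivative_eq_intros)
  ultimately show ?thesis
    using n_integrand_nz[of a b c] by (simp add: nh_gamma_eq)
qed

lemma decoupled_w_equation:
  assumes "pd4 Xi a b c \<noteq> 0"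
  shows "nh_beta h3 h4 a b c * (pdx i Xi a b c / pd4 Xi a b c) - nh_alpha h3 h4 i a b c = 0"
  using assms Xi_nz[of a b c]
  by (simp add: nh_beta_def nh_alpha_def pd4_nh_phi pdx_nh_phi field_simps)

end

theorem theorem3p2:
  fixes eps1 eps2 eps3 eps4 Lam0 :: real
    and Lam :: "real \<Rightarrow> real \<Rightarrow> real"
    and psi :: "real \<Rightarrow> real \<Rightarrow> real"
    and vLam Phi Xi A :: "real \<Rightarrow> real \<Rightarrow> real \<Rightarrow> real"
    and n1 n2 :: "nat \<Rightarrow> real \<Rightarrow> real \<Rightarrow> real"
  assumes eps: "eps1 \<in> {1, -1}" "eps2 \<in> {1, -1}" "eps3 \<in> {1, -1}" "eps4 \<in> {1, -1}"
    and smooth_Lam: "smooth3 (\<lambda>a b c. Lam a b)"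
    and smooth_vLam: "smooth3 vLam"
    and Lam0: "Lam0 \<noteq> 0"
    and smooth_Phi: "smooth3 Phi"
    and Phi_pos: "\<forall>a b c. Phi a b c > 0"
    and Phi_d4: "\<forall>a b c. pd4 Phi a b c \<noteq> 0"
    and smooth_Xi: "smooth3 Xi"
    and Xi_eq: "\<forall>a b c. pd4 Xi a b c = vLam a b c * pd4 (\<lambda>a b c. (Phi a b c)\<^sup>2) a b c"
    and Xi_nz: "\<forall>a b c. Xi a b c \<noteq> 0"
    and Xi_d4: "\<forall>a b c. pd4 Xi a b c \<noteq> 0"
    and psi_sol: "\<forall>a b. eps1 * deriv (\<lambda>t. deriv (\<lambda>s. psi s b) t) a
                     + eps2 * deriv (\<lambda>t. deriv (\<lambda>s. psi a s) t) b = 2 * Lam a b"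
    and smooth_n1: "\<forall>k\<in>{1,2}. smooth3 (\<lambda>a b c. n1 k a b)"
    and smooth_n2: "\<forall>k\<in>{1,2}. smooth3 (\<lambda>a b c. n2 k a b)"
    and A_antider: "\<forall>a b c. ((\<lambda>t. A a b t) has_real_derivative
                        ((pd4 Phi a b c)\<^sup>2 / ((Phi a b c) ^ 3 * Xi a b c))) (at c)"
  shows "decoupled_system eps1 eps2 Lam vLam psi
           (\<lambda>a b c. (Phi a b c)\<^sup>2 / (4 * Lam0))
           (\<lambda>a b c. (pd4 Phi a b c)\<^sup>2 / Xi a b c)
           (\<lambda>k a b c. n1 k a b + n2 k a b * A a b c)
           (\<lambda>i a b c. pdx i Xi a b c / pd4 Xi a b c)"
proof -
  interpret canonical_ansatz Lam0 Phi Xi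
    using Lam0 smooth_Phi Phi_pos Phi_d4 smooth_Xi Xi_nz
    by unfold_locales (metis less_irrefl)+
  have "decoupled_system eps1 eps2 Lam vLam psi h3 h4
           (\<lambda>k a b c. n1 k a b + n2 k a b * A a b c)
           (\<lambda>i a b c. pdx i Xi a b c / pd4 Xi a b c)"
    unfolding decoupled_system_def
    using psi_sol decoupled_h_equation Xi_eq decoupled_n_equation[of A] A_antider
      decoupled_w_equation Xi_d4
    by (simp add: n_integrand_def)
  then show ?thesis
    unfolding h3_def h4_def .
qed
end
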